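(* Let $m\ge 2$, let $A=(a_{ij})$ be a nonsingular $2m\times 2m$ skew-symmetric complex matrix and let $\ell=(\ell_1,\dots,\ell_m)\in\mathbb{N}^m$. Consider on $\mathbb{C}^{2m}$ with coordinates $(z_1,\dots,z_{2m})$ the holomorphic one-forms $$\Omega_{\mathbb{J}(2m)}=\sum_{j=1}^m\big(z_{2j-1}\,dz_{2j}-z_{2j}\,dz_{2j-1}\big),\qquad \Omega_A=\sum_{i,j=1}^{2m}a_{ij}\,z_i\,dz_j,$$ $$\Omega_{(\ell)}=\sum_{j=1}^m\big[z_{2j-1}\,dz_{2j}-(\ell_j z_{2j}+z_{2j-1}^{\ell_j})\,dz_{2j-1}\big].$$ Then none of the distributions $\operatorname{Ker}(\Omega_{\mathbb{J}(2m)})$, $\operatorname{Ker}(\Omega_A)$, $\operatorname{Ker}(\Omega_{(\ell)})$ admits an integral manifold through the origin.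
   Context: For a holomorphic one-form $\Omega$ on a complex manifold $V$, an integral manifold of $\operatorname{Ker}(\Omega)$ through a point $p$ is a germ at $p$ of an irreducible codimension one complex analytic subset $\Lambda$ such that, for a representative $\Lambda$ in a neighborhood of $p$, every tangent vector to the regular part $\Lambda^*=\Lambda\setminus\operatorname{sing}(\Lambda)$ lies in $\operatorname{Ker}(\Omega)$, i.e. $T\Lambda^*\subset\operatorname{Ker}(\Omega)|_{\Lambda^*}$ (singular points of $\Lambda$ need not be zeros of $\Omega$). $\mathbb{N}$ denotes the positive integers. *)

theory Defs
  imports "HOL-Analysis.Analysis"
begin

text \<open>Points of C^N are vectors of type complex^'k (N = CARD('k)).
A holomorphic one-form is represented by its value Om p v = Omega_p(v)
(complex linear in v).\<close>

definition cscale :: "complex \<Rightarrow> complex^'k \<Rightarrow> complex^'k" where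
  "cscale c v = (\<chi> i. c * v $ i)"

definition cderiv_at :: "(complex^'k \<Rightarrow> complex) \<Rightarrow> (complex^'k \<Rightarrow> complex) \<Rightarrow> complex^'k \<Rightarrow> bool" where
  "cderiv_at f L p \<longleftrightarrow> (f has_derivative L) (at p) \<and> (\<forall>c v. L (cscale c v) = c * L v)"

definition holo_on :: "(complex^'k \<Rightarrow> complex) \<Rightarrow> (complex^'k) set \<Rightarrow> bool" where
  "holo_on f U \<longleftrightarrow> open U \<and> (\<forall>p\<in>U. \<exists>L. cderiv_at f L p)"

definition analytic_subset :: "(complex^'k) set \<Rightarrow> (complex^'k) set \<Rightarrow> bool" where
  "analytic_subset L U \<longleftrightarrow> open U \<and> L \<subseteq> U \<and> closedin (top_of_set U) L \<and>
     (\<forall>p\<in>U. \<exists>W (k::nat) g. open W \<and> p \<in> W \<and> W \<subseteq> U \<and> (\<forall>i<k. holo_on (g i) W) \<and>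
        L \<inter> W = {z\<in>W. \<forall>i<k. g i z = 0})"

text \<open>Local presentation of L near q as a complex submanifold of complex dimension d:
L \<inter> W is the common zero set of N-d holomorphic functions on W whose differentials are
complex linearly independent at every point of W.\<close>
definition regular_presentation ::
  "(complex^'k) set \<Rightarrow> complex^'k \<Rightarrow> nat \<Rightarrow> (complex^'k) set \<Rightarrow> (nat \<Rightarrow> complex^'k \<Rightarrow> complex) \<Rightarrow> bool" where
  "regular_presentation L q d W g \<longleftrightarrow> q \<in> L \<and> d \<le> CARD('k) \<and> open W \<and> q \<in> W \<and>
     (\<forall>i<CARD('k) - d. holo_on (g i) W) \<and>
     L \<inter> W = {z\<in>W. \<forall>i<CARD('k) - d. g i z = 0} \<and>
     (\<forall>z\<in>W. \<exists>D. (\<forall>i<CARD('k) - d. cderiv_at (g i) (D i) z) \<and>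
        (\<forall>c. (\<forall>v. (\<Sum>i<CARD('k) - d. c i * D i v) = 0) \<longrightarrow> (\<forall>i<CARD('k) - d. c i = 0)))"

definition regular_dim :: "(complex^'k) set \<Rightarrow> complex^'k \<Rightarrow> nat \<Rightarrow> bool" where
  "regular_dim L q d \<longleftrightarrow> (\<exists>W g. regular_presentation L q d W g)"

definition regular_pt :: "(complex^'k) set \<Rightarrow> complex^'k \<Rightarrow> bool" where
  "regular_pt L q \<longleftrightarrow> (\<exists>d. regular_dim L q d)"

text \<open>Tangent space at a regular point q = common kernel of the differentials of the
defining functions; it is required to lie in Ker(Om_q).\<close>
definition tangent_in_kernel ::
  "(complex^'k \<Rightarrow> complex^'k \<Rightarrow> complex) \<Rightarrow> (complex^'k) set \<Rightarrow> complex^'k \<Rightarrow> bool" where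
  "tangent_in_kernel Om L q \<longleftrightarrow>
     (\<forall>d W g D. regular_presentation L q d W g \<and> (\<forall>i<CARD('k) - d. cderiv_at (g i) (D i) q) \<longrightarrow>
        (\<forall>v. (\<forall>i<CARD('k) - d. D i v = 0) \<longrightarrow> Om q v = 0))"

definition germ_eq :: "complex^'k \<Rightarrow> (complex^'k) set \<Rightarrow> (complex^'k) set \<Rightarrow> bool" where
  "germ_eq p A B \<longleftrightarrow> (\<exists>W. open W \<and> p \<in> W \<and> A \<inter> W = B \<inter> W)"

definition irreducible_germ :: "(complex^'k) set \<Rightarrow> (complex^'k) set \<Rightarrow> complex^'k \<Rightarrow> bool" where
  "irreducible_germ L U p \<longleftrightarrow> p \<in> L \<and>
     \<not> (\<exists>W L1 L2. open W \<and> p \<in> W \<and> W \<subseteq> U \<and> analytic_subset L1 W \<and> analytic_subset L2 W \<and>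
          L \<inter> W = L1 \<union> L2 \<and> \<not> germ_eq p L1 L \<and> \<not> germ_eq p L2 L)"

text \<open>Dimension of the germ at p: maximal dimension of regular points near p.\<close>
definition germ_dim :: "(complex^'k) set \<Rightarrow> complex^'k \<Rightarrow> nat \<Rightarrow> bool" where
  "germ_dim L p d \<longleftrightarrow>
     (\<exists>W. open W \<and> p \<in> W \<and> (\<forall>q\<in>W. \<forall>e. regular_dim L q e \<longrightarrow> e \<le> d)) \<and>
     (\<forall>W. open W \<and> p \<in> W \<longrightarrow> (\<exists>q\<in>W. regular_dim L q d))"

text \<open>L (a representative in the open neighbourhood U of p) is an integral manifold
of Ker(Om) through p.\<close>
definition integral_manifold ::
  "(complex^'k \<Rightarrow> complex^'k \<Rightarrow> complex) \<Rightarrow> complex^'k \<Rightarrow> (complex^'k) set \<Rightarrow> (complex^'k) set \<Rightarrow> bool" where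
  "integral_manifold Om p U L \<longleftrightarrow> open U \<and> p \<in> U \<and> analytic_subset L U \<and>
     irreducible_germ L U p \<and> germ_dim L p (CARD('k) - 1) \<and>
     (\<forall>q\<in>L. regular_pt L q \<longrightarrow> tangent_in_kernel Om L q)"

definition has_integral_manifold :: "(complex^'k \<Rightarrow> complex^'k \<Rightarrow> complex) \<Rightarrow> complex^'k \<Rightarrow> bool" where
  "has_integral_manifold Om p \<longleftrightarrow> (\<exists>U L. integral_manifold Om p U L)"

text \<open>Coordinates on C^{2m}: index (j, False) is z_{2j-1}, index (j, True) is z_{2j}.\<close>
definition Omega_J :: "complex^('m::finite \<times> bool) \<Rightarrow> complex^('m \<times> bool) \<Rightarrow> complex" where
  "Omega_J z v = (\<Sum>j\<in>UNIV. z $ (j, False) * v $ (j, True) - z $ (j, True) * v $ (j, False))"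

definition Omega_A :: "complex^'n^'n \<Rightarrow> complex^'n \<Rightarrow> complex^'n \<Rightarrow> complex" where
  "Omega_A A z v = (\<Sum>i\<in>UNIV. \<Sum>j\<in>UNIV. A $ i $ j * z $ i * v $ j)"

definition Omega_l :: "('m::finite \<Rightarrow> nat) \<Rightarrow> complex^('m \<times> bool) \<Rightarrow> complex^('m \<times> bool) \<Rightarrow> complex" where
  "Omega_l l z v = (\<Sum>j\<in>UNIV. z $ (j, False) * v $ (j, True)
      - (of_nat (l j) * z $ (j, True) + z $ (j, False) ^ l j) * v $ (j, False))"

end

theory Submission
  imports Defs "HOL-Complex_Analysis.Cauchy_Integral_Formula"
begin

text \<open>Each of the three forms can be written as \<open>Om z w = M(z, w) + dP\<^sub>z(w)\<close> with a constant
  nondegenerate skew-symmetric bilinear form \<open>M\<close>. At a regular point \<open>q\<close> of an integral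
  hypersurface the tangent hyperplane has dimension \<open>2m - 1 \<ge> 3\<close>, so it contains \<open>u, v\<close>
  with \<open>M(u, v) \<noteq> 0\<close>. Pull the small circle \<open>q + s (cos t u + sin t v)\<close> back to the
  hypersurface through a local straightening diffeomorphism. The resulting loop \<open>\<gamma>\<close> is
  tangent to \<open>Ker Om\<close>, so \<open>M(\<gamma> - q, \<gamma>')\<close> is an exact derivative and has mean zero over
  the loop; but it equals \<open>s\<^sup>2 M(u, v)\<close> up to an error that is an arbitrarily small
  multiple of \<open>s\<^sup>2\<close>.\<close>

section \<open>Complex derivatives\<close>

lemma norm_cscale: "norm (cscale c v) = cmod c * norm v"
  unfolding cscale_def norm_vec_def by (simp add: L2_set_right_distrib norm_mult)

lemma cscale_0_left [simp]: "cscale 0 v = 0"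
  by (simp add: cscale_def vec_eq_iff)

lemma bounded_linear_cscale_left: "bounded_linear (\<lambda>c. cscale c (w::complex^'k))"
proof (rule bounded_linear_intro[where K = "norm w"])
  show "cscale (x + y) w = cscale x w + cscale y w" for x y
    by (simp add: cscale_def vec_eq_iff algebra_simps)
  show "cscale (r *\<^sub>R x) w = r *\<^sub>R cscale x w" for r x
    by (simp add: cscale_def vec_eq_iff mult_scaleR_left)
  show "norm (cscale x w) \<le> norm x * norm w" for x
    by (simp add: norm_cscale)
qed

lemma cderiv_at_linear: "cderiv_at f L p \<Longrightarrow> linear L"
  unfolding cderiv_at_def has_derivative_def by (auto intro: bounded_linear.linear)

lemma cderiv_at_cscale: "cderiv_at f L p \<Longrightarrow> L (cscale c v) = c * L v"
  unfolding cderiv_at_def by blast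

lemma cderiv_at_scaleR: "cderiv_at f L p \<Longrightarrow> L (r *\<^sub>R v) = of_real r * L v"
  by (metis cderiv_at_linear linear_scale scaleR_conv_of_real)

lemma cderiv_at_coordinates:
  assumes "cderiv_at f L p"
  shows "L h = (\<Sum>i\<in>UNIV. h $ i * L (axis i 1))"
proof -
  have "h = (\<Sum>i\<in>UNIV. cscale (h $ i) (axis i 1))"
    by (simp add: vec_eq_iff cscale_def axis_def sum_component if_distrib cong: if_cong)
  then have "L h = (\<Sum>i\<in>UNIV. L (cscale (h $ i) (axis i 1)))"
    by (metis (no_types) cderiv_at_linear[OF assms] linear_sum)
  then show ?thesis
    by (simp add: cderiv_at_cscale[OF assms])
qed

lemma cderiv_at_has_field_derivative_on_line:
  assumes "cderiv_at g L (z + cscale \<zeta> h)"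
  shows "((\<lambda>\<zeta>. g (z + cscale \<zeta> h)) has_field_derivative L h) (at \<zeta>)"
proof -
  have "((\<lambda>\<zeta>. z + cscale \<zeta> h) has_derivative (\<lambda>t. cscale t h)) (at \<zeta>)"
    by (auto intro!: derivative_eq_intros bounded_linear.has_derivative[OF bounded_linear_cscale_left])
  moreover have "(g has_derivative L) (at (z + cscale \<zeta> h))"
    using assms unfolding cderiv_at_def by auto
  ultimately have "((g \<circ> (\<lambda>\<zeta>. z + cscale \<zeta> h)) has_derivative (L \<circ> (\<lambda>t. cscale t h))) (at \<zeta>)"
    by (rule diff_chain_at)
  moreover have "L \<circ> (\<lambda>t. cscale t h) = (*) (L h)"
    using cderiv_at_cscale[OF assms] by (auto simp: fun_eq_iff mult.commute)
  ultimately show ?thesis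
    unfolding has_field_derivative_def by (simp add: o_def)
qed

lemma cderiv_at_difference_Cauchy_bound:
  assumes der: "\<forall>z\<in>W. cderiv_at g (G z) z" and "\<rho> > 0"
    and line: "\<And>\<zeta>. cmod \<zeta> \<le> \<rho> \<Longrightarrow> z + cscale \<zeta> h \<in> W \<and> z0 + cscale \<zeta> h \<in> W"
    and bound: "\<And>\<zeta>. cmod \<zeta> = \<rho> \<Longrightarrow> cmod (g (z + cscale \<zeta> h) - g (z0 + cscale \<zeta> h)) \<le> B"
  shows "cmod (G z h - G z0 h) \<le> B / \<rho>"
proof -
  define f where "f \<zeta> = g (z + cscale \<zeta> h) - g (z0 + cscale \<zeta> h)" for \<zeta>
  have f_deriv: "(f has_field_derivative G (z + cscale \<zeta> h) h - G (z0 + cscale \<zeta> h) h) (at \<zeta>)"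
    if "cmod \<zeta> \<le> \<rho>" for \<zeta>
    unfolding f_def using line[OF that] der
    by (intro DERIV_diff cderiv_at_has_field_derivative_on_line) auto
  have "f holomorphic_on ball 0 \<rho>"
    unfolding holomorphic_on_def field_differentiable_def
    using f_deriv by (metis has_field_derivative_at_within less_eq_real_def mem_ball_0)
  moreover have "continuous_on (cball 0 \<rho>) f"
    by (rule continuous_at_imp_continuous_on) (use f_deriv DERIV_isCont in force)
  ultimately have "norm ((deriv ^^ 1) f 0) \<le> fact 1 * B / \<rho> ^ 1"
    using \<open>\<rho> > 0\<close> bound by (intro Cauchy_inequality) (auto simp: f_def)
  moreover have "deriv f 0 = G z h - G z0 h"
    using f_deriv[of 0] \<open>\<rho> > 0\<close> by (simp add: DERIV_imp_deriv)
  ultimately show ?thesis by simp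
qed

text \<open>Holomorphic functions are \<open>C\<^sup>1\<close>: by Cauchy's inequality on complex lines, the
  variation of the derivative is controlled by the (uniformly small) variation of the
  function itself.\<close>
lemma cderiv_at_continuous:
  fixes g :: "complex^'k::finite \<Rightarrow> complex"
  assumes W: "open W" and der: "\<forall>z\<in>W. cderiv_at g (G z) z" and z0: "z0 \<in> W"
  shows "continuous (at z0) (\<lambda>z. G z h)"
proof -
  obtain r where r: "r > 0" "cball z0 (2 * r) \<subseteq> W"
    using W z0 open_contains_cball by (metis field_sum_of_halves half_gt_zero_iff mult_2)
  define \<rho> where "\<rho> = r / (norm h + 1)"
  have "norm h + 1 > 0"
    by (simp add: add_nonneg_pos)
  then have \<rho>: "\<rho> > 0" "\<rho> * norm h \<le> r"
    using r by (simp_all add: \<rho>_def pos_divide_le_eq algebra_simps)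
  have near: "y + cscale \<zeta> h \<in> cball z0 (2 * r)" if "dist y z0 < r" "cmod \<zeta> \<le> \<rho>" for y \<zeta>
  proof -
    have "norm (cscale \<zeta> h) \<le> r"
      unfolding norm_cscale using that \<rho> by (metis mult_right_mono norm_ge_zero order_trans)
    then show ?thesis
      using that norm_triangle_ineq[of "y - z0" "cscale \<zeta> h"]
      by (simp add: dist_norm norm_minus_commute algebra_simps)
  qed
  have "continuous_on (cball z0 (2 * r)) g"
    using r der unfolding cderiv_at_def
    by (intro continuous_at_imp_continuous_on) (auto intro: has_derivative_continuous)
  then have unif: "uniformly_continuous_on (cball z0 (2 * r)) g"
    by (rule compact_uniformly_continuous) simp
  show ?thesis
    unfolding continuous_at_eps_delta
  proof (intro allI impI)
    fix e :: real assume "e > 0"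
    then obtain d where d: "d > 0" "\<forall>x\<in>cball z0 (2 * r). \<forall>x'\<in>cball z0 (2 * r).
        dist x' x < d \<longrightarrow> dist (g x') (g x) < e * \<rho> / 2"
      using unif \<rho> unfolding uniformly_continuous_on_def by (metis half_gt_zero mult_pos_pos)
    have "cmod (G z h - G z0 h) \<le> e * \<rho> / 2 / \<rho>" if z: "dist z z0 < min d r" for z
    proof (rule cderiv_at_difference_Cauchy_bound[OF der \<open>\<rho> > 0\<close>])
      show "z + cscale \<zeta> h \<in> W \<and> z0 + cscale \<zeta> h \<in> W" if "cmod \<zeta> \<le> \<rho>" for \<zeta>
        using near[OF _ that, of z] near[OF _ that, of z0] z r by auto
      show "cmod (g (z + cscale \<zeta> h) - g (z0 + cscale \<zeta> h)) \<le> e * \<rho> / 2"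
        if "cmod \<zeta> = \<rho>" for \<zeta>
        using d(2) near[of z \<zeta>] near[of z0 \<zeta>] z r that
        by (fastforce simp: dist_norm)
    qed
    then have "dist (G z h) (G z0 h) < e" if "dist z z0 < min d r" for z
      using that \<open>e > 0\<close> \<rho> by (fastforce simp: dist_norm)
    then show "\<exists>\<delta>>0. \<forall>z. dist z z0 < \<delta> \<longrightarrow> dist (G z h) (G z0 h) < e"
      using d r by (intro exI[of _ "min d r"]) auto
  qed
qed

lemma cderiv_at_locally_close:
  fixes g :: "complex^'k::finite \<Rightarrow> complex"
  assumes W: "open W" and der: "\<forall>z\<in>W. cderiv_at g (G z) z" and z0: "z0 \<in> W"
    and "\<epsilon> > 0"
  obtains \<delta> where "\<delta> > 0" "ball z0 \<delta> \<subseteq> W"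
    "\<And>z h. z \<in> ball z0 \<delta> \<Longrightarrow> cmod (G z h - G z0 h) \<le> \<epsilon> * norm h"
proof -
  define e where "e = \<epsilon> / real CARD('k)"
  have "e > 0" using \<open>\<epsilon> > 0\<close> by (simp add: e_def)
  have "\<forall>\<^sub>F z in at z0. dist (G z (axis i 1)) (G z0 (axis i 1)) < e" for i
    using cderiv_at_continuous[OF W der z0, of "axis i 1"] \<open>e > 0\<close>
    unfolding continuous_at tendsto_iff by blast
  then have "\<forall>\<^sub>F z in at z0. \<forall>i. dist (G z (axis i 1)) (G z0 (axis i 1)) < e"
    by (rule eventually_all_finite)
  then obtain d where d: "d > 0"
    "\<And>z i. z \<noteq> z0 \<Longrightarrow> dist z z0 < d \<Longrightarrow> dist (G z (axis i 1)) (G z0 (axis i 1)) < e"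
    unfolding eventually_at by blast
  obtain r where r: "r > 0" "ball z0 r \<subseteq> W"
    using W z0 open_contains_ball by blast
  show ?thesis
  proof
    show "min d r > 0" "ball z0 (min d r) \<subseteq> W" using d r by auto
    fix z h assume z: "z \<in> ball z0 (min d r)"
    have axis_bound: "cmod (G z (axis i 1) - G z0 (axis i 1)) \<le> e" for i
      using d(2)[of z i] z \<open>e > 0\<close> by (cases "z = z0") (auto simp: dist_commute dist_norm norm_minus_commute)
    have "G z h - G z0 h = (\<Sum>i\<in>UNIV. h $ i * (G z (axis i 1) - G z0 (axis i 1)))"
      using cderiv_at_coordinates[of g "G z" z h] cderiv_at_coordinates[of g "G z0" z0 h]
        der z r z0 by (auto simp: right_diff_distrib sum_subtractf)
    also have "cmod \<dots> \<le> (\<Sum>i\<in>UNIV. cmod (h $ i * (G z (axis i 1) - G z0 (axis i 1))))"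
      by (rule norm_sum)
    also have "\<dots> \<le> (\<Sum>i\<in>(UNIV::'k set). norm h * e)"
      using axis_bound by (intro sum_mono)
        (auto simp: norm_mult intro!: mult_mono Finite_Cartesian_Product.norm_nth_le)
    also have "\<dots> = \<epsilon> * norm h" by (simp add: e_def)
    finally show "cmod (G z h - G z0 h) \<le> \<epsilon> * norm h" .
  qed
qed

section \<open>Bilinear forms\<close>

definition bilin_form :: "('k::finite \<Rightarrow> 'k \<Rightarrow> complex) \<Rightarrow> complex^'k \<Rightarrow> complex^'k \<Rightarrow> complex" where
  "bilin_form M x y = (\<Sum>i\<in>UNIV. \<Sum>k\<in>UNIV. M i k * x $ i * y $ k)"

definition skew_form :: "('k \<Rightarrow> 'k \<Rightarrow> complex) \<Rightarrow> bool" where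
  "skew_form M \<longleftrightarrow> (\<forall>i k. M k i = - M i k)"

definition nondegenerate_form :: "('k::finite \<Rightarrow> 'k \<Rightarrow> complex) \<Rightarrow> bool" where
  "nondegenerate_form M \<longleftrightarrow> (\<forall>x::complex^'k. (\<forall>k. (\<Sum>i\<in>UNIV. M i k * x $ i) = 0) \<longrightarrow> x = 0)"

lemma bilin_form_right_coordinates:
  "bilin_form M x y = (\<Sum>k\<in>UNIV. (\<Sum>i\<in>UNIV. M i k * x $ i) * y $ k)"
  unfolding bilin_form_def by (subst sum.swap) (simp add: sum_distrib_right)

lemma bilin_form_scaleR_left: "bilin_form M (r *\<^sub>R x) y = of_real r * bilin_form M x y"
  unfolding bilin_form_def vector_scaleR_component
  by (simp add: scaleR_conv_of_real sum_distrib_left algebra_simps)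

lemma bilin_form_scaleR_right: "bilin_form M x (r *\<^sub>R y) = of_real r * bilin_form M x y"
  unfolding bilin_form_def vector_scaleR_component
  by (simp add: scaleR_conv_of_real sum_distrib_left algebra_simps)

lemma bounded_bilinear_bilin_form: "bounded_bilinear (bilin_form M)"
proof -
  have "bilinear (bilin_form M)"
    unfolding bilinear_def
  proof (intro allI conjI linearI)
    show "bilin_form M x (y + z) = bilin_form M x y + bilin_form M x z"
      "bilin_form M (y + z) x = bilin_form M y x + bilin_form M z x" for x y z
      by (simp_all add: bilin_form_def algebra_simps sum.distrib)
    show "bilin_form M x (r *\<^sub>R y) = r *\<^sub>R bilin_form M x y"
      "bilin_form M (r *\<^sub>R y) x = r *\<^sub>R bilin_form M y x" for x y r
      by (metis bilin_form_scaleR_left bilin_form_scaleR_right scaleR_conv_of_real)+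
  qed
  then show ?thesis
    by (simp add: bilinear_conv_bounded_bilinear)
qed

lemma skew_form_bilin_form_commute:
  assumes "skew_form M"
  shows "bilin_form M y x = - bilin_form M x y"
proof -
  have "bilin_form M y x = (\<Sum>i\<in>UNIV. \<Sum>k\<in>UNIV. M k i * y $ k * x $ i)"
    unfolding bilin_form_def by (subst sum.swap) simp
  also have "\<dots> = (\<Sum>i\<in>UNIV. \<Sum>k\<in>UNIV. - (M i k * x $ i * y $ k))"
  proof (intro sum.cong refl)
    fix i k
    have "M k i = - M i k"
      using assms unfolding skew_form_def by blast
    then show "M k i * y $ k * x $ i = - (M i k * x $ i * y $ k)"
      by simp
  qed
  also have "\<dots> = - bilin_form M x y"
    unfolding bilin_form_def by (simp add: sum_negf)
  finally show ?thesis .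
qed

lemma skew_form_bilin_form_rotation:
  assumes "skew_form M"
  shows "bilin_form M (cos t *\<^sub>R u + sin t *\<^sub>R v) ((- sin t) *\<^sub>R u + cos t *\<^sub>R v) = bilin_form M u v"
proof -
  interpret B: bounded_bilinear "bilin_form M"
    by (rule bounded_bilinear_bilin_form)
  have self: "bilin_form M x x = 0" for x
    using skew_form_bilin_form_commute[OF assms, of x x] by simp
  have "bilin_form M (cos t *\<^sub>R u + sin t *\<^sub>R v) ((- sin t) *\<^sub>R u + cos t *\<^sub>R v)
      = ((of_real (sin t))\<^sup>2 + (of_real (cos t))\<^sup>2) * bilin_form M u v"
    using skew_form_bilin_form_commute[OF assms, of v u]
    by (simp add: B.add_left B.add_right B.diff_right bilin_form_scaleR_left
        bilin_form_scaleR_right self power2_eq_square algebra_simps)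
  also have "(complex_of_real (sin t))\<^sup>2 + (complex_of_real (cos t))\<^sup>2 = 1"
    by (metis of_real_add of_real_power sin_cos_squared_add of_real_1)
  finally show ?thesis
    by simp
qed

text \<open>If \<open>M\<close> vanished on \<open>H \<times> H\<close>, the hyperplane \<open>H\<close> would lie in the left kernel of \<open>H\<close>,
  which has dimension \<open>1\<close>. Concretely, the vectors \<open>kv k\<close> span \<open>H\<close>; each \<open>Y (kv k)\<close> is then
  a multiple of \<open>p\<close>, which makes \<open>kv i1\<close> and \<open>kv i2\<close> linearly dependent.\<close>
lemma nondegenerate_form_not_zero_on_hyperplane:
  fixes M :: "'k::finite \<Rightarrow> 'k \<Rightarrow> complex" and p :: "'k \<Rightarrow> complex"
  assumes card: "CARD('k) \<ge> 3" and nondeg: "nondegenerate_form M" and p: "p i0 \<noteq> 0"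
  obtains u v :: "complex^'k" where "(\<Sum>i\<in>UNIV. p i * u $ i) = 0" "(\<Sum>i\<in>UNIV. p i * v $ i) = 0"
    "bilin_form M u v \<noteq> 0"
proof (rule ccontr)
  note witness = that
  assume "\<not> thesis"
  then have iso: "bilin_form M u v = 0"
    if "(\<Sum>i\<in>UNIV. p i * u $ i) = 0" "(\<Sum>i\<in>UNIV. p i * v $ i) = 0" for u v
    using witness that by blast
  obtain i1 i2 :: 'k where i: "i1 \<noteq> i0" "i2 \<noteq> i0" "i1 \<noteq> i2"
  proof -
    have small: "\<not> UNIV \<subseteq> {i0, i1}" for i1 :: 'k
    proof
      assume "UNIV \<subseteq> {i0, i1}"
      then have "CARD('k) \<le> card {i0, i1}"
        by (intro card_mono) auto
      also have "\<dots> \<le> 2"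
        by (simp add: card_insert_if)
      finally show False
        using card by simp
    qed
    obtain i1 where "i1 \<notin> {i0, i0}"
      using small[of i0] by blast
    moreover obtain i2 where "i2 \<notin> {i0, i1}"
      using small[of i1] by blast
    ultimately show thesis
      using that by blast
  qed
  define Y where "Y u k = (\<Sum>i\<in>UNIV. M i k * u $ i)" for u :: "complex^'k" and k
  define kv where "kv k = (\<chi> j. (if j = k then p i0 else 0) - (if j = i0 then p k else 0))" for k
  have kv_mult: "f j * kv k $ j = (if j = k then f k * p i0 else 0) - (if j = i0 then f i0 * p k else 0)"
    for f j k
    by (simp add: kv_def right_diff_distrib)
  have kv_in_H: "(\<Sum>j\<in>UNIV. p j * kv k $ j) = 0" for k
    unfolding kv_mult by (simp add: sum_subtractf)
  define lam where "lam u = Y u i0 / p i0" for u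
  have Y_kv: "Y (kv k) j = lam (kv k) * p j" for j k
  proof -
    have "bilin_form M (kv k) (kv j) = Y (kv k) j * p i0 - Y (kv k) i0 * p j"
      unfolding bilin_form_right_coordinates Y_def[symmetric] kv_mult[of "Y (kv k)"]
      by (simp add: sum_subtractf)
    then show ?thesis
      using iso[OF kv_in_H kv_in_H] p by (simp add: lam_def field_simps)
  qed
  have Y_lincomb: "Y (cscale a x - cscale b y) k = a * Y x k - b * Y y k" for a b x y k
    by (simp add: Y_def cscale_def sum_distrib_left sum_subtractf algebra_simps)
  have "\<forall>k. Y (cscale (lam (kv i2)) (kv i1) - cscale (lam (kv i1)) (kv i2)) k = 0"
    by (simp add: Y_lincomb Y_kv)
  then have "cscale (lam (kv i2)) (kv i1) - cscale (lam (kv i1)) (kv i2) = 0"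
    using nondeg unfolding nondegenerate_form_def Y_def by blast
  then have "(cscale (lam (kv i2)) (kv i1) - cscale (lam (kv i1)) (kv i2)) $ i2 = 0"
    by simp
  then have "lam (kv i1) = 0"
    using i p by (simp add: cscale_def kv_def)
  then have "kv i1 = 0"
    using nondeg Y_kv unfolding nondegenerate_form_def Y_def[symmetric] by simp
  moreover have "kv i1 $ i1 = p i0"
    using i by (simp add: kv_def)
  ultimately show False
    using p by simp
qed

section \<open>Closed integral curves\<close>

text \<open>Along a closed curve tangent to \<open>Om = M(z, dz) + dP\<close>, the quantity \<open>M(\<gamma> - q, \<gamma>')\<close> is the
  derivative of \<open>-(P \<circ> \<gamma>) - M(q, \<gamma>)\<close>, so it cannot stay uniformly close to a nonzero constant.\<close>
lemma closed_integral_curve_bilin_form_bound: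
  fixes \<gamma> d :: "real \<Rightarrow> complex^'k::finite"
  assumes derP: "\<forall>z. (P has_derivative (\<lambda>w. Om z w - bilin_form M z w)) (at z)"
    and \<gamma>: "\<And>t. (\<gamma> has_vector_derivative d t) (at t)"
    and closed: "\<gamma> (2 * pi) = \<gamma> 0"
    and tangent: "\<And>t. Om (\<gamma> t) (d t) = 0"
  obtains t where "cmod K \<le> cmod (bilin_form M (\<gamma> t - q) (d t) - K)"
proof -
  interpret B: bounded_bilinear "bilin_form M"
    by (rule bounded_bilinear_bilin_form)
  define f where "f = (\<lambda>t. P (\<gamma> t) + bilin_form M q (\<gamma> t) + t *\<^sub>R K)"
  have f_deriv: "(f has_vector_derivative K - bilin_form M (\<gamma> t - q) (d t)) (at t)" for t
  proof -
    have "((P \<circ> \<gamma>) has_vector_derivative Om (\<gamma> t) (d t) - bilin_form M (\<gamma> t) (d t)) (at t)"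
      using vector_derivative_diff_chain_within[OF \<gamma> has_derivative_at_withinI] derP by blast
    moreover have "((bilin_form M q \<circ> \<gamma>) has_vector_derivative bilin_form M q (d t)) (at t)"
      by (rule vector_derivative_diff_chain_within[OF \<gamma>],
          rule bounded_linear.has_derivative[OF B.bounded_linear_right has_derivative_ident])
    moreover have "((\<lambda>t. t *\<^sub>R K) has_vector_derivative K) (at t)"
      unfolding has_vector_derivative_def by (auto intro!: derivative_eq_intros)
    ultimately have "(f has_vector_derivative
        (Om (\<gamma> t) (d t) - bilin_form M (\<gamma> t) (d t)) + bilin_form M q (d t) + K) (at t)"
      unfolding f_def by (intro has_vector_derivative_add) (simp_all add: o_def)
    then show ?thesis
      using tangent[of t] by (simp add: B.diff_left algebra_simps)
  qed
  have "continuous_on {0..2 * pi} f"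
    by (intro continuous_at_imp_continuous_on ballI has_vector_derivative_continuous[OF f_deriv])
  then obtain t where "norm (f (2 * pi) - f 0) \<le> norm ((2 * pi - 0) *\<^sub>R (K - bilin_form M (\<gamma> t - q) (d t)))"
    using mvt_general[of 0 "2 * pi" f "\<lambda>t h. h *\<^sub>R (K - bilin_form M (\<gamma> t - q) (d t))"] f_deriv
    unfolding has_vector_derivative_def by auto
  moreover have "f (2 * pi) - f 0 = (2 * pi) *\<^sub>R K"
    using closed by (simp add: f_def)
  ultimately have "cmod K \<le> cmod (K - bilin_form M (\<gamma> t - q) (d t))"
    by simp
  then show ?thesis
    using that by (metis norm_minus_commute)
qed

lemma norm_perturbation_le:
  fixes a e :: "'a::real_normed_vector"
  assumes "norm e \<le> \<kappa> * norm (a + e)" and "0 \<le> \<kappa>" "\<kappa> \<le> 1 / 2"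
  shows "norm (a + e) \<le> 2 * norm a" and "norm e \<le> 2 * \<kappa> * norm a"
proof -
  have "norm (a + e) \<le> norm a + \<kappa> * norm (a + e)"
    using norm_triangle_ineq[of a e] assms(1) by linarith
  moreover have "\<kappa> * norm (a + e) \<le> 1 / 2 * norm (a + e)"
    using mult_right_mono[OF assms(3) norm_ge_zero[of "a + e"]] by simp
  ultimately show le: "norm (a + e) \<le> 2 * norm a"
    by linarith
  then show "norm e \<le> 2 * \<kappa> * norm a"
    using assms(1) mult_left_mono[OF le assms(2)] by (simp add: algebra_simps)
qed

lemma norm_scaleR_add_scaleR_le: "norm (a *\<^sub>R u + b *\<^sub>R v) \<le> norm u + norm v"
  if "\<bar>a\<bar> \<le> 1" "\<bar>b\<bar> \<le> 1" for a b :: real and u v :: "'a::real_normed_vector"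
proof -
  have "norm (a *\<^sub>R u + b *\<^sub>R v) \<le> \<bar>a\<bar> * norm u + \<bar>b\<bar> * norm v"
    using norm_triangle_ineq[of "a *\<^sub>R u" "b *\<^sub>R v"] by simp
  also have "\<dots> \<le> norm u + norm v"
    using that by (intro add_mono) (simp_all add: mult_left_le_one_le)
  finally show ?thesis .
qed

section \<open>Straightening a hypersurface\<close>

lemma cderiv_at_Blinfun_apply:
  "cderiv_at g L z \<Longrightarrow> blinfun_apply (Blinfun L) = L"
  unfolding cderiv_at_def has_derivative_def by (auto intro: bounded_linear_Blinfun_apply)

lemma continuous_on_cderiv_Blinfun:
  fixes g :: "complex^'k::finite \<Rightarrow> complex"
  assumes W: "open W" and der: "\<forall>z\<in>W. cderiv_at g (G z) z"
  shows "continuous_on W (\<lambda>z. Blinfun (G z))"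
  unfolding continuous_on_iff
proof (intro ballI allI impI)
  fix z0 and e :: real
  assume "z0 \<in> W" "e > 0"
  then obtain \<delta> where \<delta>: "\<delta> > 0" "ball z0 \<delta> \<subseteq> W"
    "\<And>z h. z \<in> ball z0 \<delta> \<Longrightarrow> cmod (G z h - G z0 h) \<le> e / 2 * norm h"
    using cderiv_at_locally_close[OF W der, of z0 "e / 2"] by auto
  have "norm (Blinfun (G z) - Blinfun (G z0)) \<le> e / 2" if z: "z \<in> ball z0 \<delta>" for z
  proof (rule norm_blinfun_bound)
    have "z \<in> W"
      using z \<delta>(2) by blast
    then show "norm (blinfun_apply (Blinfun (G z) - Blinfun (G z0)) h) \<le> e / 2 * norm h" for h
      using \<delta>(3)[OF z] der \<open>z0 \<in> W\<close> cderiv_at_Blinfun_apply[of g "G z" z]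
        cderiv_at_Blinfun_apply[of g "G z0" z0]
      by (simp add: blinfun.diff_left)
  qed (use \<open>e > 0\<close> in simp)
  moreover have "z \<in> ball z0 \<delta>" if "dist z z0 < \<delta>" for z
    using that by (simp add: dist_commute)
  ultimately have close: "dist (Blinfun (G z)) (Blinfun (G z0)) \<le> e / 2" if "dist z z0 < \<delta>" for z
    using that by (simp add: dist_norm)
  show "\<exists>\<delta>>0. \<forall>z\<in>W. dist z z0 < \<delta> \<longrightarrow> dist (Blinfun (G z)) (Blinfun (G z0)) < e"
  proof (intro exI[of _ \<delta>] conjI ballI impI)
    fix z assume "dist z z0 < \<delta>"
    then show "dist (Blinfun (G z)) (Blinfun (G z0)) < e"
      using close[of z] \<open>e > 0\<close> by linarith
  qed (rule \<delta>(1))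
qed

lemma straightening_map_derivative:
  fixes g :: "complex^'k::finite \<Rightarrow> complex" and w :: "complex^'k"
  assumes W: "open W" "q \<in> W" and der: "\<forall>z\<in>W. cderiv_at g (G z) z"
  defines "F' \<equiv> \<lambda>z. id_blinfun + (Blinfun (\<lambda>c. cscale c w) o\<^sub>L (Blinfun (G z) - Blinfun (G q)))"
  shows straightening_map_derivative_apply:
      "\<And>z h. z \<in> W \<Longrightarrow> blinfun_apply (F' z) h = h + cscale (G z h - G q h) w"
    and straightening_map_has_derivative:
      "\<And>z. z \<in> W \<Longrightarrow> ((\<lambda>z. z + cscale (g z - G q (z - q)) w) has_derivative blinfun_apply (F' z)) (at z)"
    and continuous_on_straightening_map_derivative: "continuous_on W F'"
proof -
  have C_apply: "blinfun_apply (Blinfun (\<lambda>c. cscale c w)) c = cscale c w" for c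
    by (simp add: bounded_linear_Blinfun_apply[OF bounded_linear_cscale_left])
  show F'_apply: "blinfun_apply (F' z) h = h + cscale (G z h - G q h) w" if "z \<in> W" for z h
    using that W der cderiv_at_Blinfun_apply[of g "G z" z] cderiv_at_Blinfun_apply[of g "G q" q]
    unfolding F'_def blinfun.add_left blinfun_apply_blinfun_compose blinfun.diff_left
    by (simp add: C_apply)
  show "((\<lambda>z. z + cscale (g z - G q (z - q)) w) has_derivative blinfun_apply (F' z)) (at z)"
    if "z \<in> W" for z
  proof -
    have lin: "bounded_linear (G q)"
      using der W(2) unfolding cderiv_at_def has_derivative_def by blast
    have "((\<lambda>z. g z - G q (z - q)) has_derivative (\<lambda>h. G z h - G q h)) (at z)"
      using der that unfolding cderiv_at_def
      by (auto intro!: derivative_eq_intros bounded_linear.has_derivative[OF lin])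
    then have "((\<lambda>z. z + cscale (g z - G q (z - q)) w) has_derivative (\<lambda>h. h + cscale (G z h - G q h) w)) (at z)"
      by (intro has_derivative_add has_derivative_ident
          bounded_linear.has_derivative[OF bounded_linear_cscale_left])
    moreover have "blinfun_apply (F' z) = (\<lambda>h. h + cscale (G z h - G q h) w)"
      by (rule ext) (rule F'_apply[OF that])
    ultimately show ?thesis
      by simp
  qed
  show "continuous_on W F'"
    unfolding F'_def using continuous_on_cderiv_Blinfun[OF W(1) der]
    by (intro continuous_intros)
qed

text \<open>The map \<open>F z = z + (g z - G q (z - q)) w\<close> has derivative the identity at \<open>q\<close> and
  straightens the hypersurface \<open>g = 0\<close> onto the tangent hyperplane, since
  \<open>G q (F z - q) = g z\<close>; \<open>\<phi>\<close> is its local inverse near \<open>q\<close>.\<close>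
lemma straightening_local_inverse:
  fixes g :: "complex^'k::finite \<Rightarrow> complex"
  assumes W: "open W" "q \<in> W" and der: "\<forall>z\<in>W. cderiv_at g (G z) z"
    and gq: "g q = 0" and Gw: "G q w = 1" and "\<epsilon> > 0"
  obtains r \<phi> where "r > 0"
    "\<And>y. y \<in> ball q r \<Longrightarrow> \<phi> y \<in> W \<and> \<phi> y + cscale (g (\<phi> y) - G q (\<phi> y - q)) w = y"
    "\<And>y. y \<in> ball q r \<Longrightarrow> cmod (g (\<phi> y) - G q (\<phi> y - q)) \<le> \<epsilon> * norm (\<phi> y - q)"
    "\<And>y h. y \<in> ball q r \<Longrightarrow> cmod (G (\<phi> y) h - G q h) \<le> \<epsilon> * norm h"
    "\<And>y. y \<in> ball q r \<Longrightarrow> \<exists>\<phi>'. (\<phi> has_derivative \<phi>') (at y) \<and>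
        (\<forall>h. \<phi>' h + cscale (G (\<phi> y) (\<phi>' h) - G q (\<phi>' h)) w = h)"
proof -
  obtain \<delta>1 where \<delta>1: "\<delta>1 > 0" "ball q \<delta>1 \<subseteq> W"
    "\<And>z h. z \<in> ball q \<delta>1 \<Longrightarrow> cmod (G z h - G q h) \<le> \<epsilon> * norm h"
    using cderiv_at_locally_close[OF W(1) der W(2) \<open>\<epsilon> > 0\<close>] by blast
  obtain \<delta>2 where \<delta>2: "\<delta>2 > 0"
    "\<And>z. norm (z - q) < \<delta>2 \<Longrightarrow> cmod (g z - g q - G q (z - q)) \<le> \<epsilon> * norm (z - q)"
    using der W(2) \<open>\<epsilon> > 0\<close> unfolding cderiv_at_def has_derivative_at_alt by blast
  define U where "U = ball q (min \<delta>1 \<delta>2)"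
  have UW: "U \<subseteq> W" and "q \<in> U"
    using \<delta>1 \<delta>2 by (auto simp: U_def)
  define F where "F z = z + cscale (g z - G q (z - q)) w" for z
  define F' where "F' z = id_blinfun + (Blinfun (\<lambda>c. cscale c w) o\<^sub>L (Blinfun (G z) - Blinfun (G q)))"
    for z
  note F'_apply = straightening_map_derivative_apply[OF W der, of _ w, folded F'_def]
  have F_deriv: "\<And>z. z \<in> U \<Longrightarrow> (F has_derivative blinfun_apply (F' z)) (at z)"
    using straightening_map_has_derivative[OF W der, of _ w] UW unfolding F_def[abs_def] F'_def by blast
  have F'_cont: "continuous_on U F'"
    using continuous_on_subset[OF continuous_on_straightening_map_derivative[OF W der] UW]
    unfolding F'_def[abs_def] by blast
  have F'_q: "id_blinfun o\<^sub>L F' q = id_blinfun"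
    using W(2) by (intro blinfun_eqI) (simp add: F'_apply)
  obtain U' V \<phi> \<phi>' where IFT: "open U'" "U' \<subseteq> U" "q \<in> U'" "open V" "F q \<in> V"
    "homeomorphism U' V F \<phi>"
    "\<And>y. y \<in> V \<Longrightarrow> (\<phi> has_derivative \<phi>' y) (at y)"
    "\<And>y. y \<in> V \<Longrightarrow> \<phi>' y = inv (blinfun_apply (F' (\<phi> y)))"
    "\<And>y. y \<in> V \<Longrightarrow> bij (blinfun_apply (F' (\<phi> y)))"
    by (rule inverse_function_theorem[OF _ F_deriv F'_cont \<open>q \<in> U\<close> F'_q]) (auto simp: U_def)
  have "F q = q"
    using gq linear_0[OF cderiv_at_linear[of g "G q" q]] der W(2) by (simp add: F_def)
  then obtain r where r: "r > 0" "ball q r \<subseteq> V"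
    using IFT(4,5) open_contains_ball by metis
  show ?thesis
  proof (rule that[OF r(1)])
    fix y assume "y \<in> ball q r"
    then have "y \<in> V"
      using r(2) by blast
    then have \<phi>_U: "\<phi> y \<in> U" and F_\<phi>: "F (\<phi> y) = y"
      using IFT(2,6) unfolding homeomorphism_def by auto
    then have \<phi>_W: "\<phi> y \<in> W"
      using UW by blast
    have "\<phi> y \<in> ball q \<delta>1" "norm (\<phi> y - q) < \<delta>2"
      using \<phi>_U by (auto simp: U_def dist_norm norm_minus_commute)
    then show "cmod (g (\<phi> y) - G q (\<phi> y - q)) \<le> \<epsilon> * norm (\<phi> y - q)"
      "cmod (G (\<phi> y) h - G q h) \<le> \<epsilon> * norm h" for h
      using \<delta>1(3) \<delta>2(2) gq by auto
    show "\<phi> y \<in> W \<and> \<phi> y + cscale (g (\<phi> y) - G q (\<phi> y - q)) w = y"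
      using \<phi>_W F_\<phi> by (simp add: F_def)
    have "blinfun_apply (F' (\<phi> y)) (\<phi>' y h) = h" for h
      using IFT(8)[OF \<open>y \<in> V\<close>] IFT(9)[OF \<open>y \<in> V\<close>] by (simp add: bij_is_surj surj_f_inv_f)
    then have "\<phi>' y h + cscale (G (\<phi> y) (\<phi>' y h) - G q (\<phi>' y h)) w = h" for h
      using F'_apply[OF \<phi>_W] by simp
    then show "\<exists>\<phi>'. (\<phi> has_derivative \<phi>') (at y) \<and>
        (\<forall>h. \<phi>' h + cscale (G (\<phi> y) (\<phi>' h) - G q (\<phi>' h)) w = h)"
      using IFT(7)[OF \<open>y \<in> V\<close>] by blast
  qed
qed

lemma norm_diff_le_of_relative_correction:
  assumes "x + cscale a w = b" "cmod a \<le> \<epsilon> * norm x" "0 \<le> \<epsilon>" "\<epsilon> * norm w \<le> 1 / 2"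
  shows "norm (x - b) \<le> 2 * (\<epsilon> * norm w) * norm b"
proof -
  have "x - b = - cscale a w"
    using assms(1) by (auto simp: algebra_simps)
  then have "norm (x - b) = cmod a * norm w"
    by (simp add: norm_cscale)
  also have "\<dots> \<le> (\<epsilon> * norm w) * norm x"
    using mult_right_mono[OF assms(2) norm_ge_zero[of w]] by (simp add: algebra_simps)
  finally have "norm (x - b) \<le> (\<epsilon> * norm w) * norm (b + (x - b))"
    by simp
  then show ?thesis
    using assms(3,4) by (intro norm_perturbation_le(2)) auto
qed

lemma straightening_local_inverse_near_identity:
  fixes g :: "complex^'k::finite \<Rightarrow> complex"
  assumes W: "open W" "q \<in> W" and der: "\<forall>z\<in>W. cderiv_at g (G z) z"
    and gq: "g q = 0" and h0: "G q h0 \<noteq> 0" and \<kappa>: "0 < \<kappa>" "\<kappa> \<le> 1 / 2"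
  obtains r \<phi> where "r > 0"
    "\<And>y. y \<in> ball q r \<Longrightarrow> \<phi> y \<in> W \<and> g (\<phi> y) = G q (y - q)"
    "\<And>y. y \<in> ball q r \<Longrightarrow> norm (\<phi> y - y) \<le> 2 * \<kappa> * norm (y - q)"
    "\<And>y. y \<in> ball q r \<Longrightarrow> \<exists>\<phi>'. (\<phi> has_derivative \<phi>') (at y) \<and>
        (\<forall>h. G (\<phi> y) (\<phi>' h) = G q h \<and> norm (\<phi>' h - h) \<le> 2 * \<kappa> * norm h)"
proof -
  have Gq: "cderiv_at g (G q) q"
    using der W(2) by blast
  define w where "w = cscale (1 / G q h0) h0"
  have Gw: "G q w = 1"
    using h0 by (simp add: w_def cderiv_at_cscale[OF Gq])
  then have "w \<noteq> 0"
    using linear_0[OF cderiv_at_linear[OF Gq]] by auto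
  define \<epsilon> where "\<epsilon> = \<kappa> / norm w"
  have \<epsilon>: "\<epsilon> > 0" "\<epsilon> * norm w = \<kappa>"
    using \<kappa> \<open>w \<noteq> 0\<close> by (simp_all add: \<epsilon>_def)
  have Gq_correction: "G q (x + cscale a w) = G q x + a" for x a
    using Gw by (simp add: linear_add[OF cderiv_at_linear[OF Gq]] cderiv_at_cscale[OF Gq])
  obtain r \<phi> where r: "r > 0"
    and \<phi>: "\<And>y. y \<in> ball q r \<Longrightarrow> \<phi> y \<in> W \<and> \<phi> y + cscale (g (\<phi> y) - G q (\<phi> y - q)) w = y"
    and \<phi>_close: "\<And>y. y \<in> ball q r \<Longrightarrow> cmod (g (\<phi> y) - G q (\<phi> y - q)) \<le> \<epsilon> * norm (\<phi> y - q)"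
    and G_close: "\<And>y h. y \<in> ball q r \<Longrightarrow> cmod (G (\<phi> y) h - G q h) \<le> \<epsilon> * norm h"
    and \<phi>_deriv: "\<And>y. y \<in> ball q r \<Longrightarrow> \<exists>\<phi>'. (\<phi> has_derivative \<phi>') (at y) \<and>
        (\<forall>h. \<phi>' h + cscale (G (\<phi> y) (\<phi>' h) - G q (\<phi>' h)) w = h)"
    using straightening_local_inverse[OF W der gq Gw \<open>\<epsilon> > 0\<close>] by blast
  show ?thesis
  proof (rule that[OF r])
    fix y assume y: "y \<in> ball q r"
    have \<phi>_eq: "(\<phi> y - q) + cscale (g (\<phi> y) - G q (\<phi> y - q)) w = y - q"
      using \<phi>[OF y] by (simp add: algebra_simps)
    show "\<phi> y \<in> W \<and> g (\<phi> y) = G q (y - q)"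
      using \<phi>[OF y] arg_cong[OF \<phi>_eq, of "G q"] by (simp add: Gq_correction)
    show "norm (\<phi> y - y) \<le> 2 * \<kappa> * norm (y - q)"
      using norm_diff_le_of_relative_correction[OF \<phi>_eq \<phi>_close[OF y]] \<epsilon> \<kappa>(2) by simp
    obtain \<phi>' where \<phi>': "(\<phi> has_derivative \<phi>') (at y)"
      and \<phi>'_eq: "\<And>h. \<phi>' h + cscale (G (\<phi> y) (\<phi>' h) - G q (\<phi>' h)) w = h"
      using \<phi>_deriv[OF y] by blast
    have "G (\<phi> y) (\<phi>' h) = G q h \<and> norm (\<phi>' h - h) \<le> 2 * \<kappa> * norm h" for h
      using arg_cong[OF \<phi>'_eq[of h], of "G q"] \<epsilon> \<kappa>(2)
        norm_diff_le_of_relative_correction[OF \<phi>'_eq G_close[OF y]]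
      by (simp add: Gq_correction)
    with \<phi>' show "\<exists>\<phi>'. (\<phi> has_derivative \<phi>') (at y) \<and>
        (\<forall>h. G (\<phi> y) (\<phi>' h) = G q h \<and> norm (\<phi>' h - h) \<le> 2 * \<kappa> * norm h)"
      by blast
  qed
qed

lemma hypersurface_loop_near_circle:
  fixes g :: "complex^'k::finite \<Rightarrow> complex"
  assumes W: "open W" "q \<in> W" and der: "\<forall>z\<in>W. cderiv_at g (G z) z"
    and gq: "g q = 0" and h0: "G q h0 \<noteq> 0" and Gu: "G q u = 0" and Gv: "G q v = 0"
    and "\<eta> > 0"
  obtains s \<gamma> d where "s > 0" "\<And>t. (\<gamma> has_vector_derivative d t) (at t)" "\<gamma> (2 * pi) = \<gamma> 0"
    "\<And>t. \<gamma> t \<in> W \<and> g (\<gamma> t) = 0 \<and> G (\<gamma> t) (d t) = 0"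
    "\<And>t. norm (\<gamma> t - q - s *\<^sub>R (cos t *\<^sub>R u + sin t *\<^sub>R v)) \<le> \<eta> * s"
    "\<And>t. norm (d t - s *\<^sub>R ((- sin t) *\<^sub>R u + cos t *\<^sub>R v)) \<le> \<eta> * s"
proof -
  have Gq: "cderiv_at g (G q) q"
    using der W(2) by blast
  define R where "R = norm u + norm v"
  define \<kappa> where "\<kappa> = min (1 / 2) (\<eta> / (2 * (R + 1)))"
  have R: "R \<ge> 0"
    by (simp add: R_def)
  have "\<kappa> > 0"
    using R \<open>\<eta> > 0\<close> by (auto simp: \<kappa>_def)
  moreover have "\<kappa> \<le> 1 / 2"
    unfolding \<kappa>_def by (rule min.cobounded1)
  ultimately have \<kappa>: "\<kappa> > 0" "\<kappa> \<le> 1 / 2"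
    by blast+
  have "2 * \<kappa> * R \<le> 2 * (\<eta> / (2 * (R + 1))) * R"
    using R by (intro mult_right_mono) (auto simp: \<kappa>_def)
  also have "\<dots> \<le> \<eta>"
    using R \<open>\<eta> > 0\<close> by (simp add: field_simps)
  finally have \<kappa>_R: "2 * \<kappa> * R \<le> \<eta>" .
  obtain r \<phi> where r: "r > 0" and \<phi>: "\<And>y. y \<in> ball q r \<Longrightarrow> \<phi> y \<in> W \<and> g (\<phi> y) = G q (y - q)"
    and \<phi>_close: "\<And>y. y \<in> ball q r \<Longrightarrow> norm (\<phi> y - y) \<le> 2 * \<kappa> * norm (y - q)"
    and \<phi>_deriv: "\<And>y. y \<in> ball q r \<Longrightarrow> \<exists>\<phi>'. (\<phi> has_derivative \<phi>') (at y) \<and>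
        (\<forall>h. G (\<phi> y) (\<phi>' h) = G q h \<and> norm (\<phi>' h - h) \<le> 2 * \<kappa> * norm h)"
    using straightening_local_inverse_near_identity[OF W der gq h0 \<kappa>(1,2)] by blast
  define s where "s = r / (2 * (R + 1))"
  have "s > 0"
    unfolding s_def using r R by (intro divide_pos_pos) auto
  moreover have "s * (R + 1) = r / 2"
    using R by (simp add: s_def field_simps add_nonneg_eq_0_iff)
  ultimately have s: "s > 0" "s * R < r"
    using r by (auto simp: algebra_simps)
  define c where "c t = s *\<^sub>R (cos t *\<^sub>R u + sin t *\<^sub>R v)" for t
  define c' where "c' t = s *\<^sub>R ((- sin t) *\<^sub>R u + cos t *\<^sub>R v)" for t
  have c_norm: "norm (c t) \<le> s * R" "norm (c' t) \<le> s * R" for t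
    using s(1) norm_scaleR_add_scaleR_le[of "cos t" "sin t" u v]
      norm_scaleR_add_scaleR_le[of "- sin t" "cos t" u v]
    by (auto simp: c_def c'_def R_def intro: mult_left_mono)
  have c_tangent: "G q (c t) = 0" "G q (c' t) = 0" for t
    using Gu Gv by (simp_all add: c_def c'_def cderiv_at_scaleR[OF Gq]
        linear_add[OF cderiv_at_linear[OF Gq]] linear_diff[OF cderiv_at_linear[OF Gq]])
  have c_in: "q + c t \<in> ball q r" for t
    using c_norm(1)[of t] s(2) by (simp add: dist_norm)
  have c_deriv: "((\<lambda>t. q + c t) has_vector_derivative c' t) (at t)" for t
    unfolding c_def c'_def has_vector_derivative_def
    by (auto intro!: derivative_eq_intros simp: algebra_simps)
  obtain \<Phi> where \<Phi>: "\<And>t. (\<phi> has_derivative \<Phi> t) (at (q + c t))"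
    "\<And>t h. G (\<phi> (q + c t)) (\<Phi> t h) = G q h \<and> norm (\<Phi> t h - h) \<le> 2 * \<kappa> * norm h"
    using \<phi>_deriv[OF c_in] by metis
  have small: "2 * \<kappa> * (s * R) \<le> \<eta> * s"
    using mult_right_mono[OF \<kappa>_R less_imp_le[OF s(1)]] by (simp add: algebra_simps)
  show ?thesis
  proof (rule that[OF s(1), where \<gamma> = "\<lambda>t. \<phi> (q + c t)" and d = "\<lambda>t. \<Phi> t (c' t)"])
    show "((\<lambda>t. \<phi> (q + c t)) has_vector_derivative \<Phi> t (c' t)) (at t)" for t
      using vector_derivative_diff_chain_within[OF c_deriv has_derivative_at_withinI[OF \<Phi>(1)]]
      by (simp add: o_def)
    show "\<phi> (q + c (2 * pi)) = \<phi> (q + c 0)"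
      by (simp add: c_def)
    fix t
    show "\<phi> (q + c t) \<in> W \<and> g (\<phi> (q + c t)) = 0 \<and> G (\<phi> (q + c t)) (\<Phi> t (c' t)) = 0"
      using \<phi>[OF c_in] \<Phi>(2)[of t "c' t"] c_tangent by simp
    have "norm (\<phi> (q + c t) - (q + c t)) \<le> 2 * \<kappa> * (s * R)"
      using \<phi>_close[OF c_in, of t] c_norm(1)[of t] \<kappa>(1) by (smt (verit) add_diff_cancel_left' mult_left_mono)
    then show "norm (\<phi> (q + c t) - q - s *\<^sub>R (cos t *\<^sub>R u + sin t *\<^sub>R v)) \<le> \<eta> * s"
      using small by (simp add: c_def algebra_simps)
    have "norm (\<Phi> t (c' t) - c' t) \<le> 2 * \<kappa> * (s * R)"
      using \<Phi>(2)[of t "c' t"] c_norm(2)[of t] \<kappa>(1) by (smt (verit) mult_left_mono)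
    then show "norm (\<Phi> t (c' t) - s *\<^sub>R ((- sin t) *\<^sub>R u + cos t *\<^sub>R v)) \<le> \<eta> * s"
      using small by (simp add: c'_def)
  qed
qed

section \<open>Integral hypersurfaces\<close>

lemma cderiv_kernel_not_isotropic:
  fixes g :: "complex^'k::finite \<Rightarrow> complex"
  assumes card: "CARD('k) \<ge> 3" and nondeg: "nondegenerate_form M"
    and L: "cderiv_at g L q" and h0: "L h0 \<noteq> 0"
  obtains u v where "L u = 0" "L v = 0" "bilin_form M u v \<noteq> 0"
proof -
  define p where "p i = L (axis i 1)" for i
  have L_p: "L h = (\<Sum>i\<in>UNIV. p i * h $ i)" for h
    using cderiv_at_coordinates[OF L, of h] by (simp add: p_def mult.commute)
  have "\<exists>i0. p i0 \<noteq> 0"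
  proof (rule ccontr)
    assume "\<nexists>i0. p i0 \<noteq> 0"
    then have "L h0 = 0"
      unfolding L_p by simp
    with h0 show False ..
  qed
  then obtain i0 where "p i0 \<noteq> 0" ..
  then obtain u v where "(\<Sum>i\<in>UNIV. p i * u $ i) = 0" "(\<Sum>i\<in>UNIV. p i * v $ i) = 0"
    and "bilin_form M u v \<noteq> 0"
    by (rule nondegenerate_form_not_zero_on_hyperplane[OF card nondeg])
  then show ?thesis
    using that unfolding L_p[symmetric] by blast
qed

lemma skew_form_near_rotated_pair:
  assumes skew: "skew_form M" and K: "\<And>x y. cmod (bilin_form M x y) \<le> norm x * norm y * K"
    and "0 \<le> K" "0 \<le> s" "0 \<le> \<eta>" "\<eta> \<le> 1"
    and x: "norm (x - s *\<^sub>R (cos t *\<^sub>R u + sin t *\<^sub>R v)) \<le> \<eta> * s"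
    and y: "norm (y - s *\<^sub>R ((- sin t) *\<^sub>R u + cos t *\<^sub>R v)) \<le> \<eta> * s"
  shows "cmod (bilin_form M x y - of_real (s * s) * bilin_form M u v)
    \<le> (s * s) * (K * \<eta> * (2 * (norm u + norm v) + 1))"
proof -
  interpret B: bounded_bilinear "bilin_form M"
    by (rule bounded_bilinear_bilin_form)
  define R where "R = norm u + norm v"
  define a where "a = s *\<^sub>R (cos t *\<^sub>R u + sin t *\<^sub>R v)"
  define b where "b = s *\<^sub>R ((- sin t) *\<^sub>R u + cos t *\<^sub>R v)"
  have ab: "norm a \<le> s * R" "norm b \<le> s * R"
    using \<open>0 \<le> s\<close> norm_scaleR_add_scaleR_le[of "cos t" "sin t" u v]
      norm_scaleR_add_scaleR_le[of "- sin t" "cos t" u v]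
    by (auto simp: a_def b_def R_def intro: mult_left_mono)
  have "norm y \<le> s * R + \<eta> * s"
    using norm_triangle_ineq[of b "y - b"] ab(2) y by (simp add: b_def)
  have "bilin_form M a b = of_real (s * s) * bilin_form M u v"
    using skew_form_bilin_form_rotation[OF skew, of t u v]
    by (simp add: a_def b_def bilin_form_scaleR_left bilin_form_scaleR_right)
  then have "bilin_form M x y - of_real (s * s) * bilin_form M u v
      = bilin_form M (x - a) y + bilin_form M a (y - b)"
    by (simp add: B.diff_left B.diff_right)
  also have "cmod \<dots> \<le> norm (x - a) * norm y * K + norm a * norm (y - b) * K"
    by (rule order_trans[OF norm_triangle_ineq add_mono[OF K K]])
  also have "\<dots> \<le> (\<eta> * s) * (s * R + \<eta> * s) * K + (s * R) * (\<eta> * s) * K"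
    using x y ab \<open>norm y \<le> s * R + \<eta> * s\<close> assms(3-5)
    by (intro add_mono mult_right_mono mult_mono) (auto simp: a_def b_def R_def)
  also have "\<dots> = (s * s) * (K * \<eta> * (2 * R + \<eta>))"
    by (simp add: algebra_simps)
  also have "\<dots> \<le> (s * s) * (K * \<eta> * (2 * R + 1))"
    using assms(3-6) by (intro mult_left_mono) auto
  finally show ?thesis
    by (simp add: R_def)
qed

lemma no_integral_hypersurface_at_regular_point:
  fixes g :: "complex^'k::finite \<Rightarrow> complex" and M :: "'k \<Rightarrow> 'k \<Rightarrow> complex"
  assumes card: "CARD('k) \<ge> 3" and skew: "skew_form M" and nondeg: "nondegenerate_form M"
    and derP: "\<forall>z. (P has_derivative (\<lambda>w. Om z w - bilin_form M z w)) (at z)"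
    and W: "open W" "q \<in> W" and der: "\<forall>z\<in>W. cderiv_at g (G z) z" and gq: "g q = 0"
    and h0: "G q h0 \<noteq> 0"
    and tangent: "\<And>z v. z \<in> W \<Longrightarrow> g z = 0 \<Longrightarrow> G z v = 0 \<Longrightarrow> Om z v = 0"
  shows False
proof -
  have Gq: "cderiv_at g (G q) q"
    using der W(2) by blast
  obtain u v where Gu: "G q u = 0" and Gv: "G q v = 0" and uv: "bilin_form M u v \<noteq> 0"
    by (rule cderiv_kernel_not_isotropic[OF card nondeg Gq h0])
  obtain K where K: "K > 0" "\<And>x y. cmod (bilin_form M x y) \<le> norm x * norm y * K"
    using bounded_bilinear.pos_bounded[OF bounded_bilinear_bilin_form] by blast
  define C where "C = K * (2 * (norm u + norm v) + 1)"
  define Bb where "Bb = cmod (bilin_form M u v)"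
  define \<eta> where "\<eta> = min 1 (Bb / (2 * C))"
  have "C > 0" and "Bb > 0"
    using K uv by (auto simp: C_def Bb_def intro!: mult_pos_pos add_nonneg_pos)
  have "\<eta> \<le> Bb / (2 * C)"
    unfolding \<eta>_def by (rule min.cobounded2)
  then have "\<eta> * (2 * C) \<le> Bb"
    using \<open>C > 0\<close> by (simp add: pos_le_divide_eq)
  moreover have "C * \<eta> = \<eta> * (2 * C) / 2"
    by simp
  ultimately have "C * \<eta> \<le> Bb / 2"
    by linarith
  moreover have "\<eta> > 0" "\<eta> \<le> 1"
    using \<open>C > 0\<close> \<open>Bb > 0\<close> by (auto simp: \<eta>_def)
  ultimately have \<eta>: "\<eta> > 0" "\<eta> \<le> 1" "C * \<eta> \<le> Bb / 2"
    by blast+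
  obtain s \<gamma> d where s: "s > 0" and \<gamma>: "\<And>t. (\<gamma> has_vector_derivative d t) (at t)" "\<gamma> (2 * pi) = \<gamma> 0"
    and on: "\<And>t. \<gamma> t \<in> W \<and> g (\<gamma> t) = 0 \<and> G (\<gamma> t) (d t) = 0"
    and close: "\<And>t. norm (\<gamma> t - q - s *\<^sub>R (cos t *\<^sub>R u + sin t *\<^sub>R v)) \<le> \<eta> * s"
      "\<And>t. norm (d t - s *\<^sub>R ((- sin t) *\<^sub>R u + cos t *\<^sub>R v)) \<le> \<eta> * s"
    using hypersurface_loop_near_circle[OF W der gq h0 Gu Gv \<eta>(1)] by blast
  have "Om (\<gamma> t) (d t) = 0" for t
    using tangent on by blast
  then obtain t where t: "cmod (of_real (s * s) * bilin_form M u v)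
      \<le> cmod (bilin_form M (\<gamma> t - q) (d t) - of_real (s * s) * bilin_form M u v)"
    by (rule closed_integral_curve_bilin_form_bound[OF derP \<gamma>])
  also have "\<dots> \<le> (s * s) * (C * \<eta>)"
    using skew_form_near_rotated_pair[OF skew K(2) _ _ _ \<eta>(2) close] K(1) s \<eta>(1)
    by (simp add: C_def algebra_simps)
  also have "\<dots> \<le> (s * s) * (Bb / 2)"
    using \<eta>(3) by (intro mult_left_mono) auto
  finally have "(s * s) * Bb \<le> (s * s) * (Bb / 2)"
    by (simp add: Bb_def norm_mult)
  then show False
    using s \<open>Bb > 0\<close> by (simp add: mult_le_cancel_left_pos)
qed

lemma tangent_in_kernelD:
  fixes Om :: "complex^'k::finite \<Rightarrow> complex^'k \<Rightarrow> complex"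
  assumes "tangent_in_kernel Om L q" and "regular_presentation L q d W g"
    and "\<forall>i<CARD('k) - d. cderiv_at (g i) (D i) q" and "\<forall>i<CARD('k) - d. D i v = 0"
  shows "Om q v = 0"
  using assms unfolding tangent_in_kernel_def by blast

lemma integral_manifold_regular_point:
  fixes Om :: "complex^'k::finite \<Rightarrow> complex^'k \<Rightarrow> complex"
  assumes IM: "integral_manifold Om p U L"
  obtains W q g G h0 where "open W" "q \<in> W" "g q = 0" "\<forall>z\<in>W. cderiv_at g (G z) z"
    "G q h0 \<noteq> 0" "\<And>z v. z \<in> W \<Longrightarrow> g z = 0 \<Longrightarrow> G z v = 0 \<Longrightarrow> Om z v = 0"
proof -
  have N1: "CARD('k) - (CARD('k) - 1) = 1"
    by (simp add: Suc_leI)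
  have "germ_dim L p (CARD('k) - 1)"
    using IM by (simp add: integral_manifold_def)
  then obtain q where "regular_dim L q (CARD('k) - 1)"
    unfolding germ_dim_def by blast
  then obtain W g where RP: "regular_presentation L q (CARD('k) - 1) W g"
    unfolding regular_dim_def by blast
  then have W: "open W" "q \<in> W" "q \<in> L" and LW: "L \<inter> W = {z\<in>W. g 0 z = 0}"
    unfolding regular_presentation_def N1 by auto
  have "\<forall>z\<in>W. \<exists>G. cderiv_at (g 0) G z \<and> (\<exists>h. G h \<noteq> 0)"
  proof
    fix z assume "z \<in> W"
    have "\<exists>D :: nat \<Rightarrow> complex^'k \<Rightarrow> complex. cderiv_at (g 0) (D 0) z \<and> ((\<forall>v. D 0 v = 0) \<longrightarrow> (\<forall>c::nat \<Rightarrow> complex. c 0 = 0))"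
      using RP \<open>z \<in> W\<close> unfolding regular_presentation_def N1 by auto
    then obtain D :: "nat \<Rightarrow> complex^'k \<Rightarrow> complex" where D: "cderiv_at (g 0) (D 0) z"
      and indep: "(\<forall>v. D 0 v = 0) \<longrightarrow> (\<forall>c::nat \<Rightarrow> complex. c 0 = 0)"
      by blast
    have "\<not> (\<forall>c::nat \<Rightarrow> complex. c 0 = 0)"
      by (auto intro!: exI[of _ "\<lambda>_. 1"])
    then show "\<exists>G. cderiv_at (g 0) G z \<and> (\<exists>h. G h \<noteq> 0)"
      using D indep by blast
  qed
  from bchoice[OF this] obtain G where G: "\<forall>z\<in>W. cderiv_at (g 0) (G z) z \<and> (\<exists>h. G z h \<noteq> 0)"
    by blast
  then obtain h0 where h0: "G q h0 \<noteq> 0"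
    using W(2) by blast
  show ?thesis
  proof (rule that[of W q "g 0" G h0, OF W(1,2) _ _ h0])
    show "g 0 q = 0"
      using W LW by blast
    show "\<forall>z\<in>W. cderiv_at (g 0) (G z) z"
      using G by blast
    fix z v assume z: "z \<in> W" "g 0 z = 0" and "G z v = 0"
    then have "z \<in> L"
      using LW by blast
    then have RPz: "regular_presentation L z (CARD('k) - 1) W g"
      using RP z(1) unfolding regular_presentation_def by (intro conjI) simp_all
    then have "regular_pt L z"
      unfolding regular_pt_def regular_dim_def by blast
    then have "tangent_in_kernel Om L z"
      using IM \<open>z \<in> L\<close> by (simp add: integral_manifold_def)
    then show "Om z v = 0"
      using RPz bspec[OF G z(1)] \<open>G z v = 0\<close>
      by (intro tangent_in_kernelD[where D = "\<lambda>_. G z"]) (auto simp: N1)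
  qed
qed

lemma no_integral_manifold_of_skew_form:
  fixes Om :: "complex^'k::finite \<Rightarrow> complex^'k \<Rightarrow> complex"
  assumes "CARD('k) \<ge> 3" and "skew_form M" and "nondegenerate_form M"
    and "\<forall>z. (P has_derivative (\<lambda>w. Om z w - bilin_form M z w)) (at z)"
  shows "\<not> has_integral_manifold Om p"
proof
  assume "has_integral_manifold Om p"
  then obtain U L where "integral_manifold Om p U L"
    unfolding has_integral_manifold_def by blast
  then show False
  proof (rule integral_manifold_regular_point)
    fix W q g G h0
    assume W: "open W" "q \<in> W" and gq: "g q = 0" and der: "\<forall>z\<in>W. cderiv_at g (G z) z"
      and h0: "G q h0 \<noteq> 0" and tangent: "\<And>z v. z \<in> W \<Longrightarrow> g z = 0 \<Longrightarrow> G z v = 0 \<Longrightarrow> Om z v = 0"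
    show False
      by (rule no_integral_hypersurface_at_regular_point[OF assms W der gq h0 tangent])
  qed
qed

section \<open>The three forms\<close>

lemma sum_UNIV_prod_bool:
  "(\<Sum>i\<in>(UNIV::('m::finite \<times> bool) set). f i) = (\<Sum>j\<in>UNIV. f (j, False) + f (j, True))"
proof -
  have "(\<Sum>i\<in>(UNIV::('m \<times> bool) set). f i) = (\<Sum>j\<in>UNIV. \<Sum>b\<in>UNIV. f (j, b))"
    by (simp add: sum.cartesian_product)
  then show ?thesis
    by (simp add: UNIV_bool)
qed

definition block_skew_form :: "('m::finite \<Rightarrow> complex) \<Rightarrow> 'm \<times> bool \<Rightarrow> 'm \<times> bool \<Rightarrow> complex" where
  "block_skew_form c i k = c (fst i) *
     (if snd i then (if k = (fst i, False) then -1 else 0) else (if k = (fst i, True) then 1 else 0))"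

lemma block_skew_form_False_mult:
  "block_skew_form c (j, False) k * y = (if k = (j, True) then c j * y else 0)"
  by (simp add: block_skew_form_def)

lemma block_skew_form_True_mult:
  "block_skew_form c (j, True) k * y = (if k = (j, False) then - (c j * y) else 0)"
  by (simp add: block_skew_form_def)

lemma skew_form_block_skew_form: "skew_form (block_skew_form c)"
  by (auto simp: skew_form_def block_skew_form_def)

lemma bilin_form_block_skew_form:
  "bilin_form (block_skew_form c) z w
     = (\<Sum>j\<in>UNIV. c j * (z $ (j, False) * w $ (j, True) - z $ (j, True) * w $ (j, False)))"
proof -
  have row: "(\<Sum>k\<in>UNIV. block_skew_form c (j, b) k * (x * w $ k))
      = (if b then - (c j * (x * w $ (j, False))) else c j * (x * w $ (j, True)))" for j b x
    unfolding sum_UNIV_prod_bool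
    by (cases b) (simp_all add: block_skew_form_False_mult block_skew_form_True_mult sum.distrib)
  have "bilin_form (block_skew_form c) z w = (\<Sum>i\<in>UNIV. \<Sum>k\<in>UNIV. block_skew_form c i k * (z $ i * w $ k))"
    unfolding bilin_form_def by (simp add: mult.assoc)
  also have "\<dots> = (\<Sum>j\<in>UNIV. c j * (z $ (j, False) * w $ (j, True) - z $ (j, True) * w $ (j, False)))"
    unfolding sum_UNIV_prod_bool[of "\<lambda>i. \<Sum>k\<in>UNIV. block_skew_form c i k * (z $ i * w $ k)"] row
    by (simp add: algebra_simps)
  finally show ?thesis .
qed

lemma nondegenerate_form_block_skew_form:
  fixes c :: "'m::finite \<Rightarrow> complex"
  assumes "\<forall>j. c j \<noteq> 0"
  shows "nondegenerate_form (block_skew_form c)"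
  unfolding nondegenerate_form_def
proof (intro allI impI)
  fix x :: "complex^('m \<times> bool)"
  assume kernel: "\<forall>k. (\<Sum>i\<in>UNIV. block_skew_form c i k * x $ i) = 0"
  have "x $ (j, b) = 0" for j b
  proof -
    have "(\<Sum>i\<in>UNIV. block_skew_form c i (j, \<not> b) * x $ i) = 0"
      using kernel by blast
    then show ?thesis
      using assms unfolding sum_UNIV_prod_bool
      by (cases b) (simp_all add: block_skew_form_False_mult block_skew_form_True_mult)
  qed
  then show "x = 0"
    by (simp add: vec_eq_iff)
qed

lemma no_integral_manifold_Omega_J:
  assumes "CARD('m::finite \<times> bool) \<ge> 3"
  shows "\<not> has_integral_manifold (Omega_J :: complex^('m \<times> bool) \<Rightarrow> _) 0"
proof (rule no_integral_manifold_of_skew_form[OF assms skew_form_block_skew_form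
      nondegenerate_form_block_skew_form[of "\<lambda>_. 1"]])
  show "\<forall>z. ((\<lambda>_. 0) has_derivative (\<lambda>w. Omega_J z w - bilin_form (block_skew_form (\<lambda>_. 1)) z w)) (at z)"
    by (simp add: Omega_J_def bilin_form_block_skew_form)
qed simp

lemma no_integral_manifold_Omega_A:
  fixes A :: "complex^'k::finite^'k"
  assumes "CARD('k) \<ge> 3" and "transpose A = - A" and "invertible A"
  shows "\<not> has_integral_manifold (Omega_A A) 0"
proof (rule no_integral_manifold_of_skew_form[OF assms(1), where M = "\<lambda>i k. A $ i $ k"])
  show "skew_form (\<lambda>i k. A $ i $ k)"
    unfolding skew_form_def
  proof (intro allI)
    fix i k
    have "transpose A $ i $ k = (- A) $ i $ k"
      using assms(2) by simp
    then show "A $ k $ i = - A $ i $ k"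
      by (simp add: transpose_def)
  qed
  show "nondegenerate_form (\<lambda>i k. A $ i $ k)"
    unfolding nondegenerate_form_def
  proof (intro allI impI)
    fix x :: "complex^'k"
    assume "\<forall>k. (\<Sum>i\<in>UNIV. A $ i $ k * x $ i) = 0"
    then have "x v* A = 0"
      by (simp add: vec_eq_iff vector_matrix_mult_def mult.commute)
    moreover obtain A' where "A ** A' = mat 1"
      using assms(3) unfolding invertible_def by blast
    then have "x = (x v* A) v* A'"
      by (simp add: vector_matrix_mul_assoc)
    ultimately show "x = 0"
      by (simp add: vec_eq_iff vector_matrix_mult_def)
  qed
  show "\<forall>z. ((\<lambda>_. 0) has_derivative (\<lambda>w. Omega_A A z w - bilin_form (\<lambda>i k. A $ i $ k) z w)) (at z)"
    by (simp add: Omega_A_def bilin_form_def)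
qed

text \<open>With \<open>x = z\<^sub>2\<^sub>j\<^sub>-\<^sub>1\<close>, \<open>y = z\<^sub>2\<^sub>j\<close>, the \<open>j\<close>-th summand of \<open>Omega_l\<close> is
  \<open>c (x dy - y dx) + d(a x y - x\<^bsup>l + 1\<^esup> / (l + 1))\<close> with \<open>c = (1 + l) / 2\<close>, \<open>a = (1 - l) / 2\<close>.\<close>
definition Omega_l_potential :: "('m::finite \<Rightarrow> nat) \<Rightarrow> complex^('m \<times> bool) \<Rightarrow> complex" where
  "Omega_l_potential l z = (\<Sum>j\<in>UNIV. (1 - of_nat (l j)) / 2 * (z $ (j, False) * z $ (j, True))
      - 1 / of_nat (Suc (l j)) * z $ (j, False) ^ Suc (l j))"

lemma Omega_l_potential_has_derivative:
  "(Omega_l_potential l has_derivative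
     (\<lambda>w. Omega_l l z w - bilin_form (block_skew_form (\<lambda>j. (1 + of_nat (l j)) / 2)) z w)) (at z)"
proof -
  note coordinate = bounded_linear.has_derivative[OF bounded_linear_vec_nth has_derivative_ident]
  have power_term: "1 / of_nat (Suc n) * (of_nat (Suc n) * x * y ^ (Suc n - 1)) = y ^ n * (x::complex)"
    for n x y
    by (simp del: of_nat_Suc)
  have "(Omega_l_potential l has_derivative (\<lambda>w. \<Sum>j\<in>UNIV. (1 - of_nat (l j)) / 2 *
      (z $ (j, False) * w $ (j, True) + w $ (j, False) * z $ (j, True))
      - 1 / of_nat (Suc (l j)) * (of_nat (Suc (l j)) * w $ (j, False) * z $ (j, False) ^ (Suc (l j) - 1))))
      (at z)"
    unfolding Omega_l_potential_def[abs_def]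
    by (intro has_derivative_sum has_derivative_diff has_derivative_mult_right has_derivative_mult
        has_derivative_power coordinate)
  then show ?thesis
  proof (rule has_derivative_eq_rhs, intro ext)
    fix w
    show "(\<Sum>j\<in>UNIV. (1 - of_nat (l j)) / 2 * (z $ (j, False) * w $ (j, True) + w $ (j, False) * z $ (j, True))
        - 1 / of_nat (Suc (l j)) * (of_nat (Suc (l j)) * w $ (j, False) * z $ (j, False) ^ (Suc (l j) - 1)))
      = Omega_l l z w - bilin_form (block_skew_form (\<lambda>j. (1 + of_nat (l j)) / 2)) z w"
      unfolding power_term Omega_l_def bilin_form_block_skew_form sum_subtractf[symmetric]
      by (intro sum.cong refl) (simp add: field_simps)
  qed
qed

lemma no_integral_manifold_Omega_l:
  fixes l :: "'m::finite \<Rightarrow> nat"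
  assumes "CARD('m \<times> bool) \<ge> 3"
  shows "\<not> has_integral_manifold (Omega_l l) 0"
proof (rule no_integral_manifold_of_skew_form[OF assms skew_form_block_skew_form
      nondegenerate_form_block_skew_form Omega_l_potential_has_derivative[THEN allI]])
  show "\<forall>j. (1 + of_nat (l j)) / 2 \<noteq> (0::complex)"
    by (metis add.commute divide_eq_0_iff of_nat_Suc of_nat_eq_0_iff nat.simps(3) zero_neq_numeral)
qed

theorem theorem1p3:
  fixes A :: "complex^('m::finite \<times> bool)^('m \<times> bool)"
    and l :: "'m \<Rightarrow> nat"
  assumes "CARD('m) \<ge> 2"
    and "transpose A = - A"
    and "invertible A"
    and "\<forall>j. l j \<ge> 1"
  shows "\<not> has_integral_manifold (Omega_J :: complex^('m \<times> bool) \<Rightarrow> _) 0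
       \<and> \<not> has_integral_manifold (Omega_A A) 0
       \<and> \<not> has_integral_manifold (Omega_l l) 0"
proof -
  have "CARD('m \<times> bool) \<ge> 3"
    using assms(1) by simp
  then show ?thesis
    using no_integral_manifold_Omega_J no_integral_manifold_Omega_A[OF _ assms(2,3)]
      no_integral_manifold_Omega_l by blast
qed

end
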